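(* Let $G$ be a graph with a valid edge partition and let $C$ be a compatible cycle. Let $f$ be the unique edge of $C$ not in the 2-forest. Removing $f$ from the spanning tree splits it into exactly two trees $t_1$ and $t_2$. Then the number of edges of $C$ with one end in $t_1$ and the other in $t_2$ (counting $f$) is non-zero and even. Moreover, if $f'\neq f$ is any such edge of $C$ and we swap $f$ and $f'$ between the two parts of the edge partition, the result is a valid edge partition with the same associated vertex partition.
   Context: A spanning 2-forest is a spanning forest with exactly two trees (a tree may be a single vertex). A valid edge partition of a graph is a bipartition of its edge set such that one part is the edge set of a spanning tree and the other is the edge set of a spanning 2-forest; its associated vertex partition is given by the vertex sets of the two trees of the 2-forest. A cycle $C$ is compatible with the valid edge partition if all vertices of $C$ lie in the same part of the vertex partition and exactly one edge of $C$ lies in the spanning-tree part. *)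

theory Defs
  imports Main
begin

text \<open>Finite multigraphs: vertex set V, edge set E, and an incidence map
  ends assigning to each edge its set of endpoints (one endpoint for a loop,
  two for an ordinary edge). Parallel edges are allowed.\<close>

definition wf_graph :: "'v set \<Rightarrow> 'e set \<Rightarrow> ('e \<Rightarrow> 'v set) \<Rightarrow> bool" where
  "wf_graph V E ends \<longleftrightarrow> finite V \<and> finite E \<and>
     (\<forall>e\<in>E. ends e \<subseteq> V \<and> (card (ends e) = 1 \<or> card (ends e) = 2))"

definition adj :: "('e \<Rightarrow> 'v set) \<Rightarrow> 'e set \<Rightarrow> 'v \<Rightarrow> 'v \<Rightarrow> bool" where
  "adj ends F u v \<longleftrightarrow> (\<exists>e\<in>F. u \<in> ends e \<and> v \<in> ends e)"

definition connected_on :: "('e \<Rightarrow> 'v set) \<Rightarrow> 'v set \<Rightarrow> 'e set \<Rightarrow> bool" where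
  "connected_on ends W F \<longleftrightarrow> W \<noteq> {} \<and> (\<forall>u\<in>W. \<forall>v\<in>W. (adj ends F)\<^sup>*\<^sup>* u v)"

definition verts_of :: "('e \<Rightarrow> 'v set) \<Rightarrow> 'e set \<Rightarrow> 'v set" where
  "verts_of ends C = \<Union> (ends ` C)"

text \<open>Degree of v in the edge set C (a loop contributes 2).\<close>
definition degree :: "('e \<Rightarrow> 'v set) \<Rightarrow> 'e set \<Rightarrow> 'v \<Rightarrow> nat" where
  "degree ends C v = card {e\<in>C. v \<in> ends e} + card {e\<in>C. ends e = {v}}"

definition is_cycle :: "('e \<Rightarrow> 'v set) \<Rightarrow> 'e set \<Rightarrow> bool" where
  "is_cycle ends C \<longleftrightarrow> C \<noteq> {} \<and> finite C \<and> connected_on ends (verts_of ends C) C \<and>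
     (\<forall>v\<in>verts_of ends C. degree ends C v = 2)"

definition acyclic_edges :: "('e \<Rightarrow> 'v set) \<Rightarrow> 'e set \<Rightarrow> bool" where
  "acyclic_edges ends F \<longleftrightarrow> (\<nexists>C. C \<subseteq> F \<and> is_cycle ends C)"

definition is_tree :: "('e \<Rightarrow> 'v set) \<Rightarrow> 'v set \<Rightarrow> 'e set \<Rightarrow> bool" where
  "is_tree ends W F \<longleftrightarrow> (\<forall>e\<in>F. ends e \<subseteq> W) \<and> connected_on ends W F \<and> acyclic_edges ends F"

definition spanning_tree :: "'v set \<Rightarrow> 'e set \<Rightarrow> ('e \<Rightarrow> 'v set) \<Rightarrow> 'e set \<Rightarrow> bool" where
  "spanning_tree V E ends T \<longleftrightarrow> T \<subseteq> E \<and> is_tree ends V T"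

definition spanning_2forest :: "'v set \<Rightarrow> 'e set \<Rightarrow> ('e \<Rightarrow> 'v set) \<Rightarrow> 'e set \<Rightarrow> 'v set \<Rightarrow> 'v set \<Rightarrow> bool" where
  "spanning_2forest V E ends F V1 V2 \<longleftrightarrow> F \<subseteq> E \<and> V1 \<union> V2 = V \<and> V1 \<inter> V2 = {} \<and>
     (\<forall>e\<in>F. ends e \<subseteq> V1 \<or> ends e \<subseteq> V2) \<and>
     is_tree ends V1 {e\<in>F. ends e \<subseteq> V1} \<and> is_tree ends V2 {e\<in>F. ends e \<subseteq> V2}"

definition valid_edge_partition :: "'v set \<Rightarrow> 'e set \<Rightarrow> ('e \<Rightarrow> 'v set) \<Rightarrow> 'e set \<Rightarrow> 'e set \<Rightarrow> 'v set \<Rightarrow> 'v set \<Rightarrow> bool" where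
  "valid_edge_partition V E ends T F V1 V2 \<longleftrightarrow> T \<union> F = E \<and> T \<inter> F = {} \<and>
     spanning_tree V E ends T \<and> spanning_2forest V E ends F V1 V2"

definition compatible_cycle :: "'e set \<Rightarrow> ('e \<Rightarrow> 'v set) \<Rightarrow> 'e set \<Rightarrow> 'v set \<Rightarrow> 'v set \<Rightarrow> 'e set \<Rightarrow> bool" where
  "compatible_cycle E ends T V1 V2 C \<longleftrightarrow> C \<subseteq> E \<and> is_cycle ends C \<and>
     (verts_of ends C \<subseteq> V1 \<or> verts_of ends C \<subseteq> V2) \<and> card (C \<inter> T) = 1"

definition crossing_edges :: "('e \<Rightarrow> 'v set) \<Rightarrow> 'e set \<Rightarrow> 'v set \<Rightarrow> 'v set \<Rightarrow> 'e set" where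
  "crossing_edges ends C U1 U2 = {e\<in>C. ends e \<inter> U1 \<noteq> {} \<and> ends e \<inter> U2 \<noteq> {}}"

end

theory Submission
  imports Defs
begin

text \<open>Deleting f from the spanning tree T leaves two trees t1 and t2, and the ends of f lie in
  different ones, since an edge of an acyclic graph is a bridge. Every vertex of the cycle C has
  degree 2, so by the handshake lemma the number of edges of C leaving t1 is even; f is one of
  them. For another such edge f', adding f' to T - {f} reconnects t1 and t2 without creating a
  cycle, so it gives a spanning tree. On the forest side, C - {f} lies in the tree of the 2-forest
  that contains all of C, so adding f to that tree closes the cycle C and deleting f' from it
  gives a tree on the same vertex set again.\<close>

section \<open>Reachability\<close>

abbreviation reachable :: "('e \<Rightarrow> 'v set) \<Rightarrow> 'e set \<Rightarrow> 'v \<Rightarrow> 'v \<Rightarrow> bool" where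
  "reachable ends G \<equiv> (adj ends G)\<^sup>*\<^sup>*"

abbreviation wf_edges :: "('e \<Rightarrow> 'v set) \<Rightarrow> 'e set \<Rightarrow> bool" where
  "wf_edges ends G \<equiv> \<forall>g\<in>G. card (ends g) = 1 \<or> card (ends g) = 2"

abbreviation edge_closed :: "('e \<Rightarrow> 'v set) \<Rightarrow> 'e set \<Rightarrow> 'v set \<Rightarrow> bool" where
  "edge_closed ends G S \<equiv> \<forall>g\<in>G. ends g \<inter> S \<noteq> {} \<longrightarrow> ends g \<subseteq> S"

abbreviation leaving_edges :: "('e \<Rightarrow> 'v set) \<Rightarrow> 'e set \<Rightarrow> 'v set \<Rightarrow> 'e set" where
  "leaving_edges ends D S \<equiv> {e\<in>D. ends e \<inter> S \<noteq> {} \<and> \<not> ends e \<subseteq> S}"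

lemma reachable_sym:
  assumes "reachable ends G u v"
  shows "reachable ends G v u"
proof -
  have "symp (adj ends G)" unfolding symp_def adj_def by blast
  then show ?thesis using assms by (rule sympD[OF symp_rtranclp])
qed

lemma reachable_mono: "G \<subseteq> H \<Longrightarrow> reachable ends G u v \<Longrightarrow> reachable ends H u v"
  using rtranclp_mono[of "adj ends G" "adj ends H"] by (auto simp: adj_def le_fun_def)

lemma reachable_within_edge_closed:
  assumes "a \<in> S" "edge_closed ends G S" "reachable ends G a x"
  shows "x \<in> S \<and> reachable ends {g\<in>G. ends g \<subseteq> S} a x"
  using assms(3)
proof (induction rule: rtranclp_induct)
  case base thus ?case using assms(1) by simp
next
  case (step y z)
  then obtain g where g: "g \<in> G" "y \<in> ends g" "z \<in> ends g" by (auto simp: adj_def)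
  with step assms(2) have "ends g \<subseteq> S" by blast
  with g have "adj ends {g\<in>G. ends g \<subseteq> S} y z" by (auto simp: adj_def)
  with step g \<open>ends g \<subseteq> S\<close> show ?case by (auto intro: rtranclp.rtrancl_into_rtrancl)
qed

lemma edge_closed_reachable_set: "edge_closed ends G {x. reachable ends G a x}"
proof (intro ballI impI subsetI)
  fix g w assume g: "g \<in> G" "ends g \<inter> {x. reachable ends G a x} \<noteq> {}" "w \<in> ends g"
  then obtain u where u: "u \<in> ends g" "reachable ends G a u" by auto
  with g have "adj ends G u w" by (auto simp: adj_def)
  with u show "w \<in> {x. reachable ends G a x}" by (auto intro: rtranclp.rtrancl_into_rtrancl)
qed

lemma connected_on_reachable_set:
  "connected_on ends {x. reachable ends H a x} {g\<in>H. ends g \<subseteq> {x. reachable ends H a x}}"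
proof -
  define S where "S = {x. reachable ends H a x}"
  have "a \<in> S" unfolding S_def by simp
  have from_a: "reachable ends {g\<in>H. ends g \<subseteq> S} a x" if "x \<in> S" for x
  proof -
    from that have "reachable ends H a x" unfolding S_def by simp
    moreover have "edge_closed ends H S"
      unfolding S_def by (rule edge_closed_reachable_set)
    ultimately show ?thesis using reachable_within_edge_closed[OF \<open>a \<in> S\<close>] by blast
  qed
  have "connected_on ends S {g\<in>H. ends g \<subseteq> S}"
    unfolding connected_on_def
  proof (intro conjI ballI)
    show "S \<noteq> {}" using \<open>a \<in> S\<close> by blast
    fix x y assume "x \<in> S" "y \<in> S"
    then have "reachable ends {g\<in>H. ends g \<subseteq> S} x a" "reachable ends {g\<in>H. ends g \<subseteq> S} a y"
      by (auto intro: from_a reachable_sym)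
    then show "reachable ends {g\<in>H. ends g \<subseteq> S} x y" by (rule rtranclp_trans)
  qed
  then show ?thesis unfolding S_def .
qed

lemma reachable_delete_edge:
  assumes "reachable ends G a y" and e: "e \<in> G" "ends e = {a, b}"
  shows "reachable ends (G - {e}) a y \<or> reachable ends (G - {e}) b y"
  using assms(1)
proof (induction rule: rtranclp_induct)
  case (step y z)
  then obtain g where g: "g \<in> G" "y \<in> ends g" "z \<in> ends g" by (auto simp: adj_def)
  show ?case
  proof (cases "g = e")
    case True
    with g e have "z = a \<or> z = b" by blast
    then show ?thesis by (metis rtranclp.rtrancl_refl)
  next
    case False
    with g have "adj ends (G - {e}) y z" by (auto simp: adj_def)
    with step.IH show ?thesis by (meson rtranclp.rtrancl_into_rtrancl)
  qed
qed simp

section \<open>Cycles and the handshake lemma\<close>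

lemma is_cycle_loop:
  assumes "card (ends e) = 1"
  shows "is_cycle ends {e}"
proof -
  obtain v where v: "ends e = {v}" using assms by (rule card_1_singletonE)
  then have "{g\<in>{e}. v \<in> ends g} = {e}" "{g\<in>{e}. ends g = {v}} = {e}" by auto
  with v have "verts_of ends {e} = {v}" "degree ends {e} v = 2"
    by (simp_all add: verts_of_def degree_def)
  then show ?thesis by (simp add: is_cycle_def connected_on_def)
qed

lemma acyclic_edges_subset: "acyclic_edges ends F \<Longrightarrow> G \<subseteq> F \<Longrightarrow> acyclic_edges ends G"
  unfolding acyclic_edges_def by blast

lemma acyclic_edge_has_two_ends:
  assumes "acyclic_edges ends F" "g \<in> F" "card (ends g) = 1 \<or> card (ends g) = 2"
  obtains a b where "ends g = {a, b}" "a \<noteq> b"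
proof -
  have "card (ends g) \<noteq> 1"
    using assms(1,2) is_cycle_loop[of ends g] unfolding acyclic_edges_def by blast
  then have "card (ends g) = 2" using assms(3) by blast
  then show ?thesis using that by (auto simp: card_2_iff)
qed

lemma sum_degree:
  assumes "finite D" "finite W"
  shows "(\<Sum>v\<in>W. degree ends D v)
    = (\<Sum>e\<in>D. card (ends e \<inter> W) + (if \<exists>v\<in>W. ends e = {v} then 1 else 0))"
proof -
  have links: "(\<Sum>v\<in>W. card {e\<in>D. v \<in> ends e}) = (\<Sum>e\<in>D. card (ends e \<inter> W))"
  proof -
    have "(\<Sum>v\<in>W. card {e\<in>D. v \<in> ends e}) = (\<Sum>v\<in>W. \<Sum>e\<in>D. if v \<in> ends e then 1 else 0)"
      by (simp add: sum.inter_filter[OF assms(1), symmetric])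
    also have "\<dots> = (\<Sum>e\<in>D. \<Sum>v\<in>W. if v \<in> ends e then 1 else 0)" by (rule sum.swap)
    also have "\<dots> = (\<Sum>e\<in>D. card (ends e \<inter> W))"
      by (simp add: sum.inter_filter[OF assms(2), symmetric] Int_def conj_commute)
    finally show ?thesis .
  qed
  have loops: "(\<Sum>v\<in>W. card {e\<in>D. ends e = {v}})
      = (\<Sum>e\<in>D. if \<exists>v\<in>W. ends e = {v} then 1 else 0)"
  proof -
    have "(\<Sum>v\<in>W. card {e\<in>D. ends e = {v}}) = (\<Sum>v\<in>W. \<Sum>e\<in>D. if ends e = {v} then 1 else 0)"
      by (simp add: sum.inter_filter[OF assms(1), symmetric])
    also have "\<dots> = (\<Sum>e\<in>D. \<Sum>v\<in>W. if ends e = {v} then 1 else 0)" by (rule sum.swap)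
    also have "\<dots> = (\<Sum>e\<in>D. card {v\<in>W. ends e = {v}})"
      by (simp add: sum.inter_filter[OF assms(2), symmetric])
    also have "\<dots> = (\<Sum>e\<in>D. if \<exists>v\<in>W. ends e = {v} then 1 else 0)"
    proof (rule sum.cong)
      fix e
      show "card {v\<in>W. ends e = {v}} = (if \<exists>v\<in>W. ends e = {v} then 1 else 0)"
      proof (cases "\<exists>v\<in>W. ends e = {v}")
        case True
        then obtain v where "v \<in> W" "ends e = {v}" by blast
        then have "{v\<in>W. ends e = {v}} = {v}" by auto
        with True show ?thesis by simp
      next
        case False
        then have "{v\<in>W. ends e = {v}} = {}" by auto
        then have "card {v\<in>W. ends e = {v}} = 0" by (simp only: card.empty)
        with False show ?thesis by simp
      qed
    qed simp
    finally show ?thesis .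
  qed
  show ?thesis unfolding degree_def sum.distrib links loops ..
qed

lemma odd_incidences_iff_leaving:
  assumes "card (ends e) = 1 \<or> card (ends e) = 2"
  shows "odd (card (ends e \<inter> S) + (if \<exists>v\<in>S. ends e = {v} then 1 else 0))
    \<longleftrightarrow> ends e \<inter> S \<noteq> {} \<and> \<not> ends e \<subseteq> S"
  using assms
proof
  assume "card (ends e) = 1"
  then obtain v where "ends e = {v}" by (rule card_1_singletonE)
  then show ?thesis by (cases "v \<in> S") auto
next
  assume "card (ends e) = 2"
  then obtain x y where xy: "ends e = {x, y}" "x \<noteq> y" by (auto simp: card_2_iff)
  then have "\<not> (\<exists>v. ends e = {v})" by auto
  with xy show ?thesis by (cases "x \<in> S"; cases "y \<in> S") (auto simp: Int_insert_left)
qed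

text \<open>Handshake lemma: summing degrees over the vertices in S counts every edge inside S twice
  and every edge leaving S once.\<close>
lemma even_card_leaving_edges:
  assumes "finite D" "wf_edges ends D" "\<forall>v\<in>S \<inter> verts_of ends D. even (degree ends D v)"
  shows "even (card (leaving_edges ends D S))"
proof -
  define W where "W = S \<inter> verts_of ends D"
  define t where "t e = card (ends e \<inter> S) + (if \<exists>v\<in>S. ends e = {v} then 1 else 0)" for e
  have "finite (ends e)" if "e \<in> D" for e
    using assms(2) that by (metis card.infinite zero_neq_numeral zero_neq_one)
  then have "finite W" unfolding W_def verts_of_def using assms(1) by auto
  have "ends e \<inter> W = ends e \<inter> S" "(\<exists>v\<in>W. ends e = {v}) = (\<exists>v\<in>S. ends e = {v})" if "e \<in> D" for e
    using that unfolding W_def verts_of_def by auto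
  then have "(\<Sum>v\<in>W. degree ends D v) = sum t D"
    unfolding sum_degree[OF assms(1) \<open>finite W\<close>] t_def by (intro sum.cong) simp_all
  moreover have "even (\<Sum>v\<in>W. degree ends D v)" using assms(3) unfolding W_def by (auto intro: dvd_sum)
  moreover have "{e\<in>D. odd (t e)} = leaving_edges ends D S"
  proof (rule Collect_cong)
    fix e show "(e \<in> D \<and> odd (t e)) = (e \<in> D \<and> ends e \<inter> S \<noteq> {} \<and> \<not> ends e \<subseteq> S)"
      using odd_incidences_iff_leaving[of ends e S] assms(2) unfolding t_def by blast
  qed
  ultimately show ?thesis using even_sum_iff[OF assms(1), of t] by simp
qed

lemma cycle_delete_edge_reachable:
  assumes cyc: "is_cycle ends D" and "wf_edges ends D"
    and e: "e \<in> D" "p \<in> ends e" "q \<in> ends e"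
  shows "reachable ends (D - {e}) p q"
proof (rule ccontr)
  assume "\<not> reachable ends (D - {e}) p q"
  define S where "S = {x. reachable ends (D - {e}) p x}"
  have "leaving_edges ends D S = {e}"
  proof
    show "leaving_edges ends D S \<subseteq> {e}"
      using edge_closed_reachable_set[where G="D - {e}" and a=p] unfolding S_def by blast
    have "p \<in> S" "q \<notin> S" using \<open>\<not> reachable ends (D - {e}) p q\<close> unfolding S_def by simp_all
    with e show "{e} \<subseteq> leaving_edges ends D S" by blast
  qed
  moreover have "even (card (leaving_edges ends D S))"
    using cyc \<open>wf_edges ends D\<close> by (intro even_card_leaving_edges) (auto simp: is_cycle_def)
  ultimately show False by simp
qed

section \<open>Closed trails, simple paths and bridges\<close>

context
  fixes ends :: "'e \<Rightarrow> 'v set" and m :: nat and v :: "nat \<Rightarrow> 'v" and h :: "nat \<Rightarrow> 'e"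
  assumes two_le_m: "2 \<le> m" and inj_v: "inj_on v {..<m}" and inj_h: "inj_on h {..<m}"
    and ends_h: "\<And>i. i < m \<Longrightarrow> ends (h i) = {v i, v (Suc i mod m)}"
begin

lemma closed_trail_verts: "verts_of ends (h ` {..<m}) = v ` {..<m}"
proof
  show "verts_of ends (h ` {..<m}) \<subseteq> v ` {..<m}"
    unfolding verts_of_def using ends_h two_le_m by auto
  show "v ` {..<m} \<subseteq> verts_of ends (h ` {..<m})"
    unfolding verts_of_def using ends_h by fastforce
qed

lemma closed_trail_connected: "connected_on ends (v ` {..<m}) (h ` {..<m})"
proof -
  have from_v0: "reachable ends (h ` {..<m}) (v 0) (v i)" if "i < m" for i
    using that
  proof (induction i)
    case (Suc i)
    then have "ends (h i) = {v i, v (Suc i)}" using ends_h[of i] by (simp add: mod_Suc)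
    with Suc.prems have "adj ends (h ` {..<m}) (v i) (v (Suc i))" unfolding adj_def by force
    with Suc show ?case by (meson Suc_lessD rtranclp.rtrancl_into_rtrancl)
  qed simp
  show ?thesis
    unfolding connected_on_def
  proof (intro conjI ballI)
    show "v ` {..<m} \<noteq> {}" using two_le_m by (auto simp: lessThan_empty_iff)
    fix x y assume "x \<in> v ` {..<m}" "y \<in> v ` {..<m}"
    then show "reachable ends (h ` {..<m}) x y"
      using from_v0 reachable_sym by (metis imageE lessThan_iff rtranclp_trans)
  qed
qed

lemma closed_trail_degree:
  assumes j: "j < m"
  shows "degree ends (h ` {..<m}) (v j) = 2"
proof -
  define s where "s i = (if Suc i = m then 0 else Suc i)" for i
  have s_lt: "s i < m" if "i < m" for i using that two_le_m unfolding s_def by auto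
  have ends_s: "ends (h i) = {v i, v (s i)}" if "i < m" for i
    using ends_h[OF that] that unfolding s_def by (simp add: mod_Suc)
  define k where "k = (if j = 0 then m - 1 else j - 1)"
  have k: "k < m" "s k = j" "k \<noteq> j" using j two_le_m unfolding k_def s_def by auto
  have "{g\<in>h ` {..<m}. v j \<in> ends g} = {h j, h k}"
  proof
    show "{g\<in>h ` {..<m}. v j \<in> ends g} \<subseteq> {h j, h k}"
    proof
      fix g assume "g \<in> {g\<in>h ` {..<m}. v j \<in> ends g}"
      then obtain i where i: "i < m" "g = h i" "v j \<in> ends (h i)" by auto
      then have "v j = v i \<or> v j = v (s i)" using ends_s by auto
      then have "j = i \<or> j = s i" using inj_v i(1) j s_lt[OF i(1)] by (auto dest: inj_onD)
      moreover have "j = s i \<Longrightarrow> i = k" using i(1) j two_le_m unfolding s_def k_def by auto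
      ultimately show "g \<in> {h j, h k}" using i by auto
    qed
    show "{h j, h k} \<subseteq> {g\<in>h ` {..<m}. v j \<in> ends g}"
      using ends_s[OF j] ends_s[OF k(1)] k j by auto
  qed
  moreover have "h j \<noteq> h k" using inj_h j k by (auto dest: inj_onD)
  moreover have "ends (h i) \<noteq> {v j}" if "i < m" for i
  proof
    assume "ends (h i) = {v j}"
    with ends_s[OF that] have "{v i, v (s i)} = {v j}" by (rule subst)
    then have "v i = v (s i)" by (simp add: singleton_insert_inj_eq')
    then have "i = s i" using inj_v that s_lt[OF that] by (auto dest: inj_onD)
    then show False using that two_le_m unfolding s_def by (auto split: if_splits)
  qed
  then have "{g\<in>h ` {..<m}. ends g = {v j}} = {}" by auto
  ultimately show ?thesis unfolding degree_def by simp
qed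

lemma closed_trail_is_cycle: "is_cycle ends (h ` {..<m})"
  unfolding is_cycle_def closed_trail_verts
  using two_le_m closed_trail_connected closed_trail_degree by (auto simp: lessThan_empty_iff)

end

inductive simple_path :: "('e \<Rightarrow> 'v set) \<Rightarrow> 'e set \<Rightarrow> 'v list \<Rightarrow> 'e list \<Rightarrow> bool"
  for ends G where
  single: "simple_path ends G [v] []"
| extend: "simple_path ends G (w # vs) es \<Longrightarrow> e \<in> G \<Longrightarrow> ends e = {v, w} \<Longrightarrow> v \<notin> set (w # vs)
    \<Longrightarrow> simple_path ends G (v # w # vs) (e # es)"

lemma simple_path_props:
  "simple_path ends G vs es \<Longrightarrow> distinct vs \<and> length vs = Suc (length es) \<and> set es \<subseteq> G
    \<and> (\<forall>i<length es. ends (es ! i) = {vs ! i, vs ! Suc i})"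
proof (induction rule: simple_path.induct)
  case (extend w vs es e v)
  then show ?case by (auto simp: nth_Cons split: nat.split)
qed simp

lemma simple_path_drop:
  "simple_path ends G vs es \<Longrightarrow> k < length vs \<Longrightarrow> simple_path ends G (drop k vs) (drop k es)"
proof (induction arbitrary: k rule: simple_path.induct)
  case (extend w vs es e v)
  then show ?case by (cases k) (auto intro: simple_path.extend)
qed (simp add: simple_path.single)

lemma reachable_simple_path:
  assumes "wf_edges ends G" and "reachable ends G a b"
  shows "\<exists>vs es. simple_path ends G vs es \<and> hd vs = a \<and> last vs = b"
  using assms(2)
proof (induction rule: converse_rtranclp_induct)
  case base
  show ?case using simple_path.single by force
next
  case (step a y)
  then obtain vs es where p: "simple_path ends G vs es" "hd vs = y" "last vs = b" by blast
  then obtain rest where vs: "vs = y # rest"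
    using simple_path_props[OF p(1)] by (cases vs) auto
  show ?case
  proof (cases "a \<in> set vs")
    case True
    then obtain k where k: "k < length vs" "vs ! k = a" by (auto simp: in_set_conv_nth)
    with simple_path_drop[OF p(1) k(1)] p(3) show ?thesis by (metis hd_drop_conv_nth last_drop)
  next
    case False
    obtain g where g: "g \<in> G" "a \<in> ends g" "y \<in> ends g" using step(1) by (auto simp: adj_def)
    have "a \<noteq> y" using False vs by auto
    have "finite (ends g)" using assms(1) g(1) by (metis card.infinite zero_neq_numeral zero_neq_one)
    moreover have "{a, y} \<subseteq> ends g" "card {a, y} = 2" using g \<open>a \<noteq> y\<close> by auto
    moreover have "card (ends g) \<le> 2" using assms(1) g(1) by auto
    ultimately have "ends g = {a, y}" by (metis card_seteq)
    with p(1) vs g(1) False have "simple_path ends G (a # y # rest) (g # es)"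
      by (auto intro: simple_path.extend)
    with p(3) vs show ?thesis by force
  qed
qed

lemma simple_path_distinct_edges: "simple_path ends G vs es \<Longrightarrow> distinct es"
proof (induction rule: simple_path.induct)
  case (extend w vs es e v)
  have "e \<notin> set es"
  proof
    assume "e \<in> set es"
    then obtain i where i: "i < length es" "es ! i = e" by (auto simp: in_set_conv_nth)
    note props = simple_path_props[OF extend.hyps(1)]
    with i have "ends e = {(w # vs) ! i, (w # vs) ! Suc i}" "Suc i < length (w # vs)" by auto
    then have "ends e \<subseteq> set (w # vs)" by (metis Suc_lessD empty_subsetI insert_subset nth_mem)
    with extend.hyps(3,4) show False by blast
  qed
  with extend.IH show ?case by simp
qed simp

lemma simple_path_close_cycle:
  assumes p: "simple_path ends G vs es" and e: "e \<notin> G" "ends e = {hd vs, last vs}"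
    and "hd vs \<noteq> last vs"
  shows "is_cycle ends (insert e (set es))"
proof -
  note props = simple_path_props[OF p]
  define n where "n = length es"
  define v where "v i = vs ! i" for i
  define h where "h i = (if i < n then es ! i else e)" for i
  have len: "length vs = Suc n" using props unfolding n_def by simp
  have "n \<noteq> 0"
  proof
    assume "n = 0"
    with len obtain x where "vs = [x]" by (cases vs) auto
    with \<open>hd vs \<noteq> last vs\<close> show False by simp
  qed
  have inj_v: "inj_on v {..<Suc n}" unfolding v_def using props len by (simp add: inj_on_nth)
  have inj_h: "inj_on h {..<Suc n}"
  proof (rule inj_onI)
    fix i j assume "i \<in> {..<Suc n}" "j \<in> {..<Suc n}" "h i = h j"
    moreover have "es ! i \<noteq> e" if "i < n" for i
      using that props e(1) unfolding n_def by (metis nth_mem subsetD)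
    ultimately show "i = j"
      using simple_path_distinct_edges[OF p] unfolding h_def n_def
      by (auto simp: nth_eq_iff_index_eq split: if_splits)
  qed
  have ends_h: "ends (h i) = {v i, v (Suc i mod Suc n)}" if "i < Suc n" for i
  proof (cases "i < n")
    case True
    then show ?thesis using props unfolding h_def v_def n_def by simp
  next
    case False
    with that have "i = n" by simp
    moreover have "vs \<noteq> []" using len by auto
    then have "vs ! 0 = hd vs" "vs ! n = last vs" by (simp_all add: hd_conv_nth last_conv_nth len)
    ultimately show ?thesis using e(2) unfolding h_def v_def by auto
  qed
  have "h ` {..<n} = (!) es ` {..<n}" unfolding h_def by simp
  also have "\<dots> = set es" using nth_image[of n es] unfolding n_def by (simp add: atLeast0LessThan)
  finally have "h ` {..<Suc n} = insert e (set es)" by (simp add: lessThan_Suc h_def[of n])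
  moreover have "2 \<le> Suc n" using \<open>n \<noteq> 0\<close> by simp
  then have "is_cycle ends (h ` {..<Suc n})"
    using closed_trail_is_cycle[of "Suc n" v h ends] inj_v inj_h ends_h by blast
  ultimately show ?thesis by simp
qed

lemma acyclic_edge_is_bridge:
  assumes acyc: "acyclic_edges ends F" and wf: "wf_edges ends F"
    and e: "e \<in> F" "ends e = {a, b}" "a \<noteq> b"
  shows "\<not> reachable ends (F - {e}) a b"
proof
  assume "reachable ends (F - {e}) a b"
  moreover have "wf_edges ends (F - {e})" using wf by blast
  ultimately obtain vs es where p: "simple_path ends (F - {e}) vs es" "hd vs = a" "last vs = b"
    using reachable_simple_path by meson
  have "e \<notin> F - {e}" "ends e = {hd vs, last vs}" "hd vs \<noteq> last vs" using p e by auto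
  with p(1) have "is_cycle ends (insert e (set es))" by (rule simple_path_close_cycle)
  moreover have "insert e (set es) \<subseteq> F" using simple_path_props[OF p(1)] e(1) by auto
  ultimately show False using acyc unfolding acyclic_edges_def by blast
qed

section \<open>Splitting and joining trees\<close>

lemma connected_delete_bridge_splits:
  assumes conn: "connected_on ends W G" and inW: "\<forall>g\<in>G. ends g \<subseteq> W"
    and e: "e \<in> G" "ends e = {a, b}" and nr: "\<not> reachable ends (G - {e}) a b"
  obtains A B where "A \<union> B = W" "A \<inter> B = {}" "\<forall>g\<in>G - {e}. ends g \<subseteq> A \<or> ends g \<subseteq> B"
    "connected_on ends A {g\<in>G - {e}. ends g \<subseteq> A}" "connected_on ends B {g\<in>G - {e}. ends g \<subseteq> B}"
    "a \<in> A" "b \<in> B"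
proof -
  define A where "A = {x. reachable ends (G - {e}) a x}"
  define B where "B = {x. reachable ends (G - {e}) b x}"
  have "a \<in> W" "b \<in> W" using inW e by auto
  have closed_W: "edge_closed ends (G - {e}) W" using inW by blast
  have "A \<subseteq> W" using reachable_within_edge_closed[OF \<open>a \<in> W\<close> closed_W] unfolding A_def by blast
  moreover have "B \<subseteq> W" using reachable_within_edge_closed[OF \<open>b \<in> W\<close> closed_W] unfolding B_def by blast
  moreover have "W \<subseteq> A \<union> B"
  proof
    fix y assume "y \<in> W"
    with conn \<open>a \<in> W\<close> have "reachable ends G a y" unfolding connected_on_def by blast
    from reachable_delete_edge[OF this e] show "y \<in> A \<union> B" unfolding A_def B_def by blast
  qed
  ultimately have "A \<union> B = W" by blast
  have "A \<inter> B = {}"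
  proof (rule ccontr)
    assume "A \<inter> B \<noteq> {}"
    then obtain x where "reachable ends (G - {e}) a x" "reachable ends (G - {e}) b x"
      unfolding A_def B_def by blast
    then have "reachable ends (G - {e}) a b" by (metis reachable_sym rtranclp_trans)
    with nr show False ..
  qed
  have "edge_closed ends (G - {e}) A" "edge_closed ends (G - {e}) B"
    unfolding A_def B_def by (rule edge_closed_reachable_set)+
  with \<open>A \<union> B = W\<close> \<open>A \<inter> B = {}\<close> inW have "\<forall>g\<in>G - {e}. ends g \<subseteq> A \<or> ends g \<subseteq> B" by blast
  moreover have "connected_on ends A {g\<in>G - {e}. ends g \<subseteq> A}"
    "connected_on ends B {g\<in>G - {e}. ends g \<subseteq> B}"
    unfolding A_def B_def by (rule connected_on_reachable_set)+
  moreover have "a \<in> A" "b \<in> B" unfolding A_def B_def by simp_all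
  ultimately show ?thesis using that \<open>A \<union> B = W\<close> \<open>A \<inter> B = {}\<close> by blast
qed

lemma is_tree_delete_edge:
  assumes tree: "is_tree ends W G" and wf: "wf_edges ends G" and e: "e \<in> G"
  obtains A B where "A \<union> B = W" "A \<inter> B = {}" "\<forall>g\<in>G - {e}. ends g \<subseteq> A \<or> ends g \<subseteq> B"
    "is_tree ends A {g\<in>G - {e}. ends g \<subseteq> A}" "is_tree ends B {g\<in>G - {e}. ends g \<subseteq> B}"
    "ends e \<inter> A \<noteq> {}" "ends e \<inter> B \<noteq> {}"
proof -
  have acyc: "acyclic_edges ends G" and conn: "connected_on ends W G" and inW: "\<forall>g\<in>G. ends g \<subseteq> W"
    using tree unfolding is_tree_def by auto
  obtain a b where ab: "ends e = {a, b}" "a \<noteq> b"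
    using acyclic_edge_has_two_ends[OF acyc e] wf e by blast
  with acyclic_edge_is_bridge[OF acyc wf e] have "\<not> reachable ends (G - {e}) a b" by blast
  then obtain A B where AB: "A \<union> B = W" "A \<inter> B = {}" "\<forall>g\<in>G - {e}. ends g \<subseteq> A \<or> ends g \<subseteq> B"
    "connected_on ends A {g\<in>G - {e}. ends g \<subseteq> A}" "connected_on ends B {g\<in>G - {e}. ends g \<subseteq> B}"
    "a \<in> A" "b \<in> B"
    using connected_delete_bridge_splits[OF conn inW e ab(1)] by blast
  have "acyclic_edges ends {g\<in>G - {e}. ends g \<subseteq> A}" "acyclic_edges ends {g\<in>G - {e}. ends g \<subseteq> B}"
    using acyc by (auto elim: acyclic_edges_subset)
  with AB(4,5) have "is_tree ends A {g\<in>G - {e}. ends g \<subseteq> A}" "is_tree ends B {g\<in>G - {e}. ends g \<subseteq> B}"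
    unfolding is_tree_def by auto
  moreover have "ends e \<inter> A \<noteq> {}" "ends e \<inter> B \<noteq> {}" using ab AB(6,7) by auto
  ultimately show ?thesis using that AB(1-3) by blast
qed

lemma acyclic_insert_leaving_edge:
  assumes acyc: "acyclic_edges ends G" and wf: "wf_edges ends (insert h G)"
    and closed: "edge_closed ends G A" and p: "p \<in> ends h" "p \<in> A" and q: "q \<in> ends h" "q \<notin> A"
  shows "acyclic_edges ends (insert h G)"
  unfolding acyclic_edges_def
proof
  assume "\<exists>D. D \<subseteq> insert h G \<and> is_cycle ends D"
  then obtain D where D: "D \<subseteq> insert h G" "is_cycle ends D" by blast
  show False
  proof (cases "h \<in> D")
    case False
    with D acyc show False unfolding acyclic_edges_def by blast
  next
    case True
    have "wf_edges ends D" using wf D(1) by blast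
    from cycle_delete_edge_reachable[OF D(2) this True p(1) q(1)]
    have "reachable ends (D - {h}) p q" .
    moreover have "D - {h} \<subseteq> G" using D(1) by blast
    ultimately have "reachable ends G p q" by (rule reachable_mono[rotated])
    with reachable_within_edge_closed[OF p(2) closed] q(2) show False by blast
  qed
qed

lemma is_tree_join:
  assumes disj: "A \<inter> B = {}" and part: "\<forall>g\<in>G. ends g \<subseteq> A \<or> ends g \<subseteq> B"
    and conn_A: "connected_on ends A {g\<in>G. ends g \<subseteq> A}"
    and conn_B: "connected_on ends B {g\<in>G. ends g \<subseteq> B}"
    and acyc: "acyclic_edges ends G" and wf: "wf_edges ends (insert h G)"
    and h: "ends h \<subseteq> A \<union> B" and p: "p \<in> ends h" "p \<in> A" and q: "q \<in> ends h" "q \<in> B"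
  shows "is_tree ends (A \<union> B) (insert h G)"
proof -
  have to_p: "reachable ends (insert h G) x p" if "x \<in> A \<union> B" for x
  proof (cases "x \<in> A")
    case True
    with conn_A p(2) have "reachable ends {g\<in>G. ends g \<subseteq> A} x p" unfolding connected_on_def by blast
    then show ?thesis by (rule reachable_mono[rotated]) blast
  next
    case False
    with that conn_B q(2) have "reachable ends {g\<in>G. ends g \<subseteq> B} x q" unfolding connected_on_def by blast
    then have "reachable ends (insert h G) x q" by (rule reachable_mono[rotated]) blast
    moreover have "adj ends (insert h G) q p" using p q unfolding adj_def by blast
    ultimately show ?thesis by (rule rtranclp.rtrancl_into_rtrancl)
  qed
  have "connected_on ends (A \<union> B) (insert h G)"
    unfolding connected_on_def
  proof (intro conjI ballI)
    show "A \<union> B \<noteq> {}" using p by blast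
    fix x y assume "x \<in> A \<union> B" "y \<in> A \<union> B"
    with to_p have "reachable ends (insert h G) x p" "reachable ends (insert h G) p y"
      by (auto intro: reachable_sym)
    then show "reachable ends (insert h G) x y" by (rule rtranclp_trans)
  qed
  moreover have "edge_closed ends G A" using part disj by blast
  with q disj have "acyclic_edges ends (insert h G)"
    by (intro acyclic_insert_leaving_edge[OF acyc wf _ p]) auto
  moreover have "\<forall>g\<in>insert h G. ends g \<subseteq> A \<union> B" using h part by blast
  ultimately show ?thesis unfolding is_tree_def by blast
qed

lemma is_tree_exchange:
  assumes tree: "is_tree ends W G" and wf: "wf_edges ends (insert f G)"
    and f: "f \<notin> G" "ends f \<subseteq> W"
    and C: "is_cycle ends C" "f \<in> C" "f' \<in> C" "f' \<noteq> f" "C \<subseteq> insert f G"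
  shows "is_tree ends W (insert f (G - {f'}))"
proof -
  have "f' \<in> G" "wf_edges ends G" using C wf by blast+
  obtain A B where AB: "A \<union> B = W" "A \<inter> B = {}" "\<forall>g\<in>G - {f'}. ends g \<subseteq> A \<or> ends g \<subseteq> B"
      "is_tree ends A {g\<in>G - {f'}. ends g \<subseteq> A}" "is_tree ends B {g\<in>G - {f'}. ends g \<subseteq> B}"
      "ends f' \<inter> A \<noteq> {}" "ends f' \<inter> B \<noteq> {}"
    by (rule is_tree_delete_edge[OF tree \<open>wf_edges ends G\<close> \<open>f' \<in> G\<close>])
  then obtain p q where pq: "p \<in> ends f'" "p \<in> A" "q \<in> ends f'" "q \<in> B" by blast
  have "wf_edges ends C" using wf C(5) by (meson subsetD)
  from cycle_delete_edge_reachable[OF C(1) this C(3) pq(1,3)]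
  have "reachable ends (C - {f'}) p q" .
  then have reach: "reachable ends (insert f (G - {f'})) p q"
    by (rule reachable_mono[rotated]) (use C(5) in blast)
  have "ends f \<inter> A \<noteq> {} \<and> \<not> ends f \<subseteq> A"
  proof (rule ccontr)
    assume "\<not> (ends f \<inter> A \<noteq> {} \<and> \<not> ends f \<subseteq> A)"
    with AB(2,3) have "edge_closed ends (insert f (G - {f'})) A" by blast
    with reachable_within_edge_closed[OF pq(2) _ reach] pq(4) AB(2) show False by blast
  qed
  then obtain p' q' where p': "p' \<in> ends f" "p' \<in> A" and q': "q' \<in> ends f" "q' \<notin> A" by blast
  with f(2) AB(1) have "q' \<in> B" by blast
  have "acyclic_edges ends (G - {f'})" using tree by (auto simp: is_tree_def elim: acyclic_edges_subset)
  moreover have "wf_edges ends (insert f (G - {f'}))" using wf by blast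
  moreover have "ends f \<subseteq> A \<union> B" using f(2) AB(1) by simp
  moreover have "connected_on ends A {g\<in>G - {f'}. ends g \<subseteq> A}"
    "connected_on ends B {g\<in>G - {f'}. ends g \<subseteq> B}"
    using AB(4,5) by (simp_all add: is_tree_def)
  ultimately have "is_tree ends (A \<union> B) (insert f (G - {f'}))"
    using is_tree_join[OF AB(2,3)] p' q'(1) \<open>q' \<in> B\<close> by blast
  with AB(1) show ?thesis by simp
qed

section \<open>Spanning trees and 2-forests\<close>

lemma spanning_2forest_commute:
  "spanning_2forest V E ends F V1 V2 \<Longrightarrow> spanning_2forest V E ends F V2 V1"
  unfolding spanning_2forest_def by (metis Int_commute Un_commute)

lemma spanning_tree_delete_edge:
  assumes tree: "spanning_tree V E ends T" and wf: "wf_edges ends T" and f: "f \<in> T"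
  shows "\<exists>U1 U2. spanning_2forest V E ends (T - {f}) U1 U2"
proof -
  have "is_tree ends V T" "T - {f} \<subseteq> E" using tree unfolding spanning_tree_def by auto
  obtain A B where
    "A \<union> B = V" "A \<inter> B = {}" "\<forall>g\<in>T - {f}. ends g \<subseteq> A \<or> ends g \<subseteq> B"
    "is_tree ends A {g\<in>T - {f}. ends g \<subseteq> A}" "is_tree ends B {g\<in>T - {f}. ends g \<subseteq> B}"
    "ends f \<inter> A \<noteq> {}" "ends f \<inter> B \<noteq> {}"
    by (rule is_tree_delete_edge[OF \<open>is_tree ends V T\<close> wf f])
  with \<open>T - {f} \<subseteq> E\<close> have "spanning_2forest V E ends (T - {f}) A B"
    unfolding spanning_2forest_def by blast
  then show ?thesis by blast
qed

lemma spanning_2forest_separates_deleted_edge: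
  assumes tree: "spanning_tree V E ends T" and wf: "wf_edges ends T" and f: "f \<in> T"
    and forest: "spanning_2forest V E ends (T - {f}) U1 U2"
  shows "ends f \<inter> U1 \<noteq> {}" "ends f \<inter> U2 \<noteq> {}"
proof -
  have acyc: "acyclic_edges ends T" and "ends f \<subseteq> V"
    using tree f unfolding spanning_tree_def is_tree_def by auto
  obtain a b where ab: "ends f = {a, b}" "a \<noteq> b"
    using acyclic_edge_has_two_ends[OF acyc f] wf f by blast
  with acyclic_edge_is_bridge[OF acyc wf f] have bridge: "\<not> reachable ends (T - {f}) a b" by blast
  have not_inside: "\<not> ends f \<subseteq> U" if "is_tree ends U {g\<in>T - {f}. ends g \<subseteq> U}" for U
  proof
    assume "ends f \<subseteq> U"
    with that ab have "reachable ends {g\<in>T - {f}. ends g \<subseteq> U} a b"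
      unfolding is_tree_def connected_on_def by blast
    then have "reachable ends (T - {f}) a b" by (rule reachable_mono[rotated]) blast
    with bridge show False ..
  qed
  have "V = U1 \<union> U2" "\<not> ends f \<subseteq> U1" "\<not> ends f \<subseteq> U2"
    using forest not_inside unfolding spanning_2forest_def by auto
  with \<open>ends f \<subseteq> V\<close> show "ends f \<inter> U1 \<noteq> {}" "ends f \<inter> U2 \<noteq> {}" by blast+
qed

lemma even_card_crossing_edges:
  assumes "is_cycle ends C" "wf_edges ends C" "\<forall>e\<in>C. ends e \<subseteq> U1 \<union> U2" "U1 \<inter> U2 = {}"
  shows "even (card (crossing_edges ends C U1 U2))"
proof -
  have "crossing_edges ends C U1 U2 = leaving_edges ends C U1"
    using assms(3,4) unfolding crossing_edges_def by blast
  with assms(1,2) show ?thesis by (simp add: even_card_leaving_edges is_cycle_def)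
qed

lemma spanning_tree_join:
  assumes wf: "wf_edges ends E" and forest: "spanning_2forest V E ends F U1 U2"
    and acyc: "acyclic_edges ends F" and h: "h \<in> E" "ends h \<subseteq> V"
    and p: "p \<in> ends h" "p \<in> U1" and q: "q \<in> ends h" "q \<in> U2"
  shows "spanning_tree V E ends (insert h F)"
proof -
  have "F \<subseteq> E" "U1 \<union> U2 = V" and disj: "U1 \<inter> U2 = {}"
    and part: "\<forall>g\<in>F. ends g \<subseteq> U1 \<or> ends g \<subseteq> U2"
    and conn: "connected_on ends U1 {g\<in>F. ends g \<subseteq> U1}" "connected_on ends U2 {g\<in>F. ends g \<subseteq> U2}"
    using forest unfolding spanning_2forest_def is_tree_def by auto
  moreover have "wf_edges ends (insert h F)" using \<open>F \<subseteq> E\<close> h(1) wf by blast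
  moreover have "ends h \<subseteq> U1 \<union> U2" using h(2) \<open>U1 \<union> U2 = V\<close> by simp
  ultimately have "is_tree ends (U1 \<union> U2) (insert h F)"
    using is_tree_join[OF disj part conn acyc] p q by blast
  with \<open>F \<subseteq> E\<close> \<open>U1 \<union> U2 = V\<close> h(1) show ?thesis unfolding spanning_tree_def by simp
qed

lemma spanning_2forest_exchange:
  assumes forest: "spanning_2forest V E ends F V1 V2" and wf: "wf_edges ends E"
    and C: "is_cycle ends C" "C \<subseteq> E" "verts_of ends C \<subseteq> V1" "C - {f} \<subseteq> F"
    and f: "f \<in> C" "f \<notin> F" and f': "f' \<in> C" "f' \<noteq> f"
  shows "spanning_2forest V E ends (insert f (F - {f'})) V1 V2"
proof -
  define F1 where "F1 = {e\<in>F. ends e \<subseteq> V1}"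
  have "F \<subseteq> E" "V1 \<union> V2 = V" "V1 \<inter> V2 = {}" "\<forall>e\<in>F. ends e \<subseteq> V1 \<or> ends e \<subseteq> V2"
    and tree1: "is_tree ends V1 F1" and tree2: "is_tree ends V2 {e\<in>F. ends e \<subseteq> V2}"
    using forest unfolding spanning_2forest_def F1_def by auto
  have in_V1: "ends g \<subseteq> V1" if "g \<in> C" for g
    using C(3) that unfolding verts_of_def by blast
  have "C \<subseteq> insert f F1" using C(4) in_V1 unfolding F1_def by blast
  moreover have "wf_edges ends (insert f F1)" using C(2) f(1) wf \<open>F \<subseteq> E\<close> unfolding F1_def by blast
  moreover have "f \<notin> F1" using f(2) unfolding F1_def by blast
  ultimately have "is_tree ends V1 (insert f (F1 - {f'}))"
    using is_tree_exchange[OF tree1 _ _ in_V1[OF f(1)] C(1) f(1) f'] by blast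
  moreover have "{e\<in>insert f (F - {f'}). ends e \<subseteq> V1} = insert f (F1 - {f'})"
    using in_V1[OF f(1)] unfolding F1_def by blast
  moreover have "ends g \<noteq> {}" if "g \<in> C" for g using wf C(2) that by fastforce
  with in_V1 f(1) f'(1) \<open>V1 \<inter> V2 = {}\<close> have "\<not> ends f \<subseteq> V2" "\<not> ends f' \<subseteq> V2" by blast+
  then have "{e\<in>insert f (F - {f'}). ends e \<subseteq> V2} = {e\<in>F. ends e \<subseteq> V2}" by blast
  ultimately show ?thesis unfolding spanning_2forest_def
    using \<open>F \<subseteq> E\<close> \<open>V1 \<union> V2 = V\<close> \<open>V1 \<inter> V2 = {}\<close> \<open>\<forall>e\<in>F. ends e \<subseteq> V1 \<or> ends e \<subseteq> V2\<close>
      in_V1[OF f(1)] C(2) f(1) tree2 by auto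
qed

lemma compatible_cycle_tree_edge:
  assumes "valid_edge_partition V E ends T F V1 V2" "compatible_cycle E ends T V1 V2 C"
    and "f \<in> C" "f \<notin> F"
  shows "C \<inter> T = {f}"
proof -
  have "card (C \<inter> T) = 1" "f \<in> C \<inter> T"
    using assms unfolding valid_edge_partition_def compatible_cycle_def by auto
  then show ?thesis by (metis card_1_singletonE singletonD)
qed

lemma valid_edge_partition_exchange:
  assumes graph: "wf_graph V E ends"
    and valid: "valid_edge_partition V E ends T F V1 V2"
    and compat: "compatible_cycle E ends T V1 V2 C" and f: "f \<in> C" "f \<notin> F"
    and forest: "spanning_2forest V E ends (T - {f}) U1 U2"
    and f': "f' \<in> crossing_edges ends C U1 U2" "f' \<noteq> f"
  shows "valid_edge_partition V E ends ((T - {f}) \<union> {f'}) ((F - {f'}) \<union> {f}) V1 V2"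
proof -
  have wf: "wf_edges ends E" and in_V: "\<forall>e\<in>E. ends e \<subseteq> V"
    using graph unfolding wf_graph_def by auto
  have TF: "T \<union> F = E" "T \<inter> F = {}" and tree: "spanning_tree V E ends T"
    and forest_F: "spanning_2forest V E ends F V1 V2"
    using valid unfolding valid_edge_partition_def by auto
  have cyc: "is_cycle ends C" "C \<subseteq> E" and sides: "verts_of ends C \<subseteq> V1 \<or> verts_of ends C \<subseteq> V2"
    using compat unfolding compatible_cycle_def by auto
  have CT: "C \<inter> T = {f}" using compatible_cycle_tree_edge[OF valid compat f] .
  have "f' \<in> C" using f' unfolding crossing_edges_def by blast
  with CT f' TF cyc have "f \<in> T" "f' \<in> F" "f' \<in> E" by auto
  have "acyclic_edges ends (T - {f})"
    using tree by (auto simp: spanning_tree_def is_tree_def elim: acyclic_edges_subset)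
  moreover obtain p q where "p \<in> ends f'" "p \<in> U1" "q \<in> ends f'" "q \<in> U2"
    using f'(1) unfolding crossing_edges_def by blast
  ultimately have "spanning_tree V E ends (insert f' (T - {f}))"
    using spanning_tree_join[OF wf forest] \<open>f' \<in> E\<close> in_V by blast
  moreover have "spanning_2forest V E ends (insert f (F - {f'})) V1 V2"
  proof -
    have "C - {f} \<subseteq> F" using CT cyc TF by blast
    from sides show ?thesis
    proof
      assume "verts_of ends C \<subseteq> V1"
      from spanning_2forest_exchange[OF forest_F wf cyc this \<open>C - {f} \<subseteq> F\<close> f \<open>f' \<in> C\<close> f'(2)]
      show ?thesis .
    next
      assume "verts_of ends C \<subseteq> V2"
      from spanning_2forest_exchange[OF spanning_2forest_commute[OF forest_F] wf cyc this
          \<open>C - {f} \<subseteq> F\<close> f \<open>f' \<in> C\<close> f'(2)]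
      show ?thesis by (rule spanning_2forest_commute)
    qed
  qed
  moreover have "insert f' (T - {f}) \<union> insert f (F - {f'}) = E"
    "insert f' (T - {f}) \<inter> insert f (F - {f'}) = {}"
    using TF \<open>f \<in> T\<close> \<open>f' \<in> F\<close> f(2) f'(2) by blast+
  ultimately show ?thesis unfolding valid_edge_partition_def by simp
qed

theorem lemma5p5:
  fixes V :: "'v set" and E :: "'e set" and ends :: "'e \<Rightarrow> 'v set"
  assumes graph: "wf_graph V E ends"
    and valid: "valid_edge_partition V E ends T F V1 V2"
    and compat: "compatible_cycle E ends T V1 V2 C"
    and f: "f \<in> C" "f \<notin> F"
  shows "(\<exists>U1 U2. spanning_2forest V E ends (T - {f}) U1 U2)
    \<and> (\<forall>U1 U2. spanning_2forest V E ends (T - {f}) U1 U2 \<longrightarrow>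
          card (crossing_edges ends C U1 U2) \<noteq> 0 \<and> even (card (crossing_edges ends C U1 U2))
        \<and> (\<forall>f'\<in>crossing_edges ends C U1 U2. f' \<noteq> f \<longrightarrow>
             valid_edge_partition V E ends ((T - {f}) \<union> {f'}) ((F - {f'}) \<union> {f}) V1 V2))"
proof -
  have wf: "wf_edges ends E" and in_V: "\<forall>e\<in>E. ends e \<subseteq> V"
    using graph unfolding wf_graph_def by auto
  have tree: "spanning_tree V E ends T" using valid unfolding valid_edge_partition_def by blast
  then have wf_T: "wf_edges ends T" using wf unfolding spanning_tree_def by blast
  have "f \<in> T" using compatible_cycle_tree_edge[OF valid compat f] by blast
  have cyc: "is_cycle ends C" "C \<subseteq> E" using compat unfolding compatible_cycle_def by auto
  have "card (crossing_edges ends C U1 U2) \<noteq> 0 \<and> even (card (crossing_edges ends C U1 U2))"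
    if forest: "spanning_2forest V E ends (T - {f}) U1 U2" for U1 U2
  proof
    have "f \<in> crossing_edges ends C U1 U2" "finite (crossing_edges ends C U1 U2)"
      using spanning_2forest_separates_deleted_edge[OF tree wf_T \<open>f \<in> T\<close> forest] f(1) cyc(1)
      unfolding crossing_edges_def is_cycle_def by auto
    then show "card (crossing_edges ends C U1 U2) \<noteq> 0" by auto
    have "U1 \<union> U2 = V" "U1 \<inter> U2 = {}" using forest unfolding spanning_2forest_def by auto
    with cyc wf in_V show "even (card (crossing_edges ends C U1 U2))"
      by (intro even_card_crossing_edges) auto
  qed
  with spanning_tree_delete_edge[OF tree wf_T \<open>f \<in> T\<close>]
    valid_edge_partition_exchange[OF graph valid compat f]
  show ?thesis by blast
qed

end
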